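(* For every point of $\mathbb{R}^8$ and every $\mathfrak{g}$-valued $2$-form $\varphi \in \Lambda^2_+\mathbb{R}^8\otimes\mathfrak{g}$ at that point, \[\sum_{k,l=1}^8 e_k \wedge [F_B(e_k,e_l), i_{e_l}\varphi] \in \Lambda^2_+\mathbb{R}^8 \otimes \mathfrak{g},\] where $F_B$ is the curvature of the connection $B$ described in the context and the bracket is the Lie bracket of $\mathfrak{g}$.
   Context: Write $\mathbb{R}^8 = E \oplus E^\perp$ with orthonormal basis $e_1,\dots,e_4$ of $E$ and $e_1^\perp,\dots,e_4^\perp$ of $E^\perp$; set $e_5=e_1^\perp,\dots,e_8=e_4^\perp$; vectors are identified with covectors via the Euclidean metric; coordinates are $(x,y)$ with $x\in E$ and $y=\sum_k y_k e_k^\perp \in E^\perp$. The $4$-form $\Omega$ is $\Omega = -e_1 e_2 e_1^\perp e_2^\perp - e_1 e_2 e_3^\perp e_4^\perp - e_3 e_4 e_1^\perp e_2^\perp - e_3 e_4 e_3^\perp e_4^\perp + e_1 e_3 e_2^\perp e_4^\perp - e_1 e_3 e_1^\perp e_3^\perp - e_2 e_4 e_2^\perp e_4^\perp + e_2 e_4 e_1^\perp e_3^\perp - e_1 e_4 e_2^\perp e_3^\perp - e_1 e_4 e_1^\perp e_4^\perp - e_2 e_3 e_2^\perp e_3^\perp - e_2 e_3 e_1^\perp e_4^\perp + e_1 e_2 e_3 e_4 + e_1^\perp e_2^\perp e_3^\perp e_4^\perp$ (juxtaposition = wedge). With $*$ the Euclidean Hodge star (orientation $e_1\wedge\dots\wedge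 e_4\wedge e_1^\perp\wedge\dots\wedge e_4^\perp$), $\Lambda^2_+\mathbb{R}^8 = \{\varphi: 3\varphi - *(\Omega\wedge\varphi)=0\}$. Let $\mathfrak{g}\subset \mathfrak{so}(E^\perp)$ be the Lie algebra spanned by $\mathfrak{i},\mathfrak{j},\mathfrak{k}$, where $\mathfrak{i}(e_1^\perp)=-e_2^\perp, \mathfrak{i}(e_2^\perp)=e_1^\perp, \mathfrak{i}(e_3^\perp)=e_4^\perp, \mathfrak{i}(e_4^\perp)=-e_3^\perp$; $\mathfrak{j}(e_1^\perp)=-e_3^\perp, \mathfrak{j}(e_2^\perp)=-e_4^\perp, \mathfrak{j}(e_3^\perp)=e_1^\perp, \mathfrak{j}(e_4^\perp)=e_2^\perp$; $\mathfrak{k}(e_1^\perp)=-e_4^\perp, \mathfrak{k}(e_2^\perp)=e_3^\perp, \mathfrak{k}(e_3^\perp)=-e_2^\perp, \mathfrak{k}(e_4^\perp)=e_1^\perp$. Fix $\varepsilon>0$. $B$ is the $\mathfrak{g}$-valued $1$-form (connection $d+B$) on $\mathbb{R}^8$ with $B(e_i)=0$ for $1\le i\le 4$ and $B(e_1^\perp)=\frac{-y_2\mathfrak{i}-y_3\mathfrak{j}-y_4\mathfrak{k}}{\varepsilon^2+|y|^2}$, $B(e_2^\perp)=\frac{y_1\mathfrak{i}-y_4\mathfrak{j}+y_3\mathfrak{k}}{\varepsilon^2+|y|^2}$, $B(e_3^\perp)=\frac{y_4\mathfrak{i}+y_1\mathfrak{j}-y_2\mathfrak{k}}{\varepsilon^2+|y|^2}$,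 $B(e_4^\perp)=\frac{-y_3\mathfrak{i}+y_2\mathfrak{j}+y_1\mathfrak{k}}{\varepsilon^2+|y|^2}$. Its curvature is $F_B = dB + \frac12[B\wedge B]$, a $\mathfrak{g}$-valued $2$-form. *)

theory Defs
  imports "HOL-Analysis.Analysis"
begin

text \<open>Exterior algebra of R^8 with orthonormal basis e_1..e_8 (e_5..e_8 = e_1^perp..e_4^perp).
 A (possibly vector-valued) form is given by its coefficient function on index sets:
 alpha = sum over S subset of {1..8} of (alpha S) e_S, with e_S the wedge of the e_i, i in S, in
 increasing order.\<close>

definition idx :: "nat set" where "idx = {1..8}"

text \<open>Sign of e_S wedge e_T relative to e_(S union T), for disjoint S, T.\<close>
definition sgn2 :: "nat set \<Rightarrow> nat set \<Rightarrow> real" where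
  "sgn2 S T = (-1) ^ card {(s, t). s \<in> S \<and> t \<in> T \<and> t < s}"

definition wedge :: "(nat set \<Rightarrow> real) \<Rightarrow> (nat set \<Rightarrow> 'v::real_vector) \<Rightarrow> nat set \<Rightarrow> 'v" where
  "wedge \<alpha> \<beta> U = (if U \<subseteq> idx then (\<Sum>S\<in>Pow U. (sgn2 S (U - S) * \<alpha> S) *\<^sub>R \<beta> (U - S)) else 0)"

text \<open>Euclidean Hodge star, orientation e_1 wedge ... wedge e_8: *e_S = sgn2 S S^c e_(S^c).\<close>
definition hodge :: "(nat set \<Rightarrow> 'v::real_vector) \<Rightarrow> nat set \<Rightarrow> 'v" where
  "hodge \<alpha> U = (if U \<subseteq> idx then sgn2 (idx - U) U *\<^sub>R \<alpha> (idx - U) else 0)"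

definition intprod :: "nat \<Rightarrow> (nat set \<Rightarrow> 'v::real_vector) \<Rightarrow> nat set \<Rightarrow> 'v" where
  "intprod l \<alpha> U = (if l \<in> idx \<and> U \<subseteq> idx \<and> l \<notin> U then sgn2 {l} U *\<^sub>R \<alpha> (insert l U) else 0)"

definition e1f :: "nat \<Rightarrow> nat set \<Rightarrow> real" where
  "e1f i = (\<lambda>U. if U = {i} then 1 else 0)"

definition w4 :: "nat \<Rightarrow> nat \<Rightarrow> nat \<Rightarrow> nat \<Rightarrow> nat set \<Rightarrow> real" where
  "w4 a b c d = wedge (e1f a) (wedge (e1f b) (wedge (e1f c) (e1f d)))"

definition Omega :: "nat set \<Rightarrow> real" where
  "Omega U =
     - w4 1 2 5 6 U - w4 1 2 7 8 U - w4 3 4 5 6 U - w4 3 4 7 8 U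
     + w4 1 3 6 8 U - w4 1 3 5 7 U - w4 2 4 6 8 U + w4 2 4 5 7 U
     - w4 1 4 6 7 U - w4 1 4 5 8 U - w4 2 3 6 7 U - w4 2 3 5 8 U
     + w4 1 2 3 4 U + w4 5 6 7 8 U"

definition is_form :: "nat \<Rightarrow> (nat set \<Rightarrow> 'v::real_vector) \<Rightarrow> bool" where
  "is_form k \<alpha> \<longleftrightarrow> (\<forall>U. \<not> (U \<subseteq> idx \<and> card U = k) \<longrightarrow> \<alpha> U = 0)"

text \<open>Endomorphisms of E^perp as 4x4 matrices w.r.t. e_1^perp..e_4^perp; M $ r $ c is the
 e_r^perp-coefficient of M(e_c^perp). Lie bracket = commutator.\<close>
type_synonym mat4 = "real^4^4"

definition lie :: "mat4 \<Rightarrow> mat4 \<Rightarrow> mat4" where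
  "lie A B = A ** B - B ** A"

definition mi :: mat4 where
  "mi = (\<chi> r c. if c = 1 \<and> r = 2 then -1 else if c = 2 \<and> r = 1 then 1
               else if c = 3 \<and> r = 4 then 1 else if c = 4 \<and> r = 3 then -1 else 0)"

definition mj :: mat4 where
  "mj = (\<chi> r c. if c = 1 \<and> r = 3 then -1 else if c = 2 \<and> r = 4 then -1
               else if c = 3 \<and> r = 1 then 1 else if c = 4 \<and> r = 2 then 1 else 0)"

definition mk :: mat4 where
  "mk = (\<chi> r c. if c = 1 \<and> r = 4 then -1 else if c = 2 \<and> r = 3 then 1
               else if c = 3 \<and> r = 2 then -1 else if c = 4 \<and> r = 1 then 1 else 0)"

definition gLie :: "mat4 set" where
  "gLie = span {mi, mj, mk}"

definition Lambda2plus_g :: "(nat set \<Rightarrow> mat4) set" where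
  "Lambda2plus_g = {\<phi>. is_form 2 \<phi> \<and> (\<forall>U. \<phi> U \<in> gLie) \<and>
                        (\<forall>U. 3 *\<^sub>R \<phi> U - hodge (wedge Omega \<phi>) U = 0)}"

text \<open>Points of R^8 are p :: nat => real with coordinates p 1 .. p 8; x = (p 1..p 4),
 y_m = p (4+m). B eps p k is B(e_k) at the point p.\<close>
definition Bconn :: "real \<Rightarrow> (nat \<Rightarrow> real) \<Rightarrow> nat \<Rightarrow> mat4" where
  "Bconn \<epsilon> p k =
    (let y = (\<lambda>m. p (4 + m)); D = \<epsilon>\<^sup>2 + (\<Sum>m\<in>{1..4}. (y m)\<^sup>2) in
     if k = 5 then (1 / D) *\<^sub>R ((- y 2) *\<^sub>R mi + (- y 3) *\<^sub>R mj + (- y 4) *\<^sub>R mk)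
     else if k = 6 then (1 / D) *\<^sub>R (y 1 *\<^sub>R mi + (- y 4) *\<^sub>R mj + y 3 *\<^sub>R mk)
     else if k = 7 then (1 / D) *\<^sub>R (y 4 *\<^sub>R mi + y 1 *\<^sub>R mj + (- y 2) *\<^sub>R mk)
     else if k = 8 then (1 / D) *\<^sub>R ((- y 3) *\<^sub>R mi + y 2 *\<^sub>R mj + y 1 *\<^sub>R mk)
     else 0)"

definition dB :: "real \<Rightarrow> (nat \<Rightarrow> real) \<Rightarrow> nat \<Rightarrow> nat \<Rightarrow> mat4" where
  "dB \<epsilon> p k l = (\<chi> r c. deriv (\<lambda>t. Bconn \<epsilon> (p(k := p k + t)) l $ r $ c) 0)"

text \<open>Curvature F_B = dB + 1/2 [B wedge B], evaluated on (e_k, e_l):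
 F_B(e_k,e_l) = d_k B(e_l) - d_l B(e_k) + [B(e_k), B(e_l)].\<close>
definition FB :: "real \<Rightarrow> (nat \<Rightarrow> real) \<Rightarrow> nat \<Rightarrow> nat \<Rightarrow> mat4" where
  "FB \<epsilon> p k l = dB \<epsilon> p k l - dB \<epsilon> p l k + lie (Bconn \<epsilon> p k) (Bconn \<epsilon> p l)"

end

theory Submission
  imports Defs
begin

(* B is the BPST instanton on E^perp = H, pulled back along the projection onto E^perp.
   With D = eps^2 + |y|^2 its curvature is
     F_B(e_k, e_l) = (2 eps^2 / D^2) (sum_b omega_b(e_k, e_l) g_b),
   where g_1, g_2, g_3 = i, j, k and omega_1, omega_2, omega_3 are the anti-self-dual 2-forms of
   E^perp. Hence the form in question is (2 eps^2 / D^2) sum_b [g_b, omega_b . phi], where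
   omega . phi = sum_{k,l} omega(e_k, e_l) e_k ^ i_{e_l} phi is the action of omega in so(8) on
   forms. The omega_b lie in spin(7), the stabiliser of Omega, so their action commutes with
   phi |-> *(Omega ^ phi) and preserves its eigenspaces, while [g_b, -] only acts on the
   g-factor. So every summand stays in Lambda^2_+ (x) g. *)

section \<open>The Lie algebra g\<close>

definition qvec :: "real \<Rightarrow> real \<Rightarrow> real \<Rightarrow> mat4" where
  "qvec a b c = a *\<^sub>R mi + b *\<^sub>R mj + c *\<^sub>R mk"

lemma qvec_eq_iff: "qvec a b c = qvec a' b' c' \<longleftrightarrow> a = a' \<and> b = b' \<and> c = c'"
proof -
  have "qvec a b c $ 1 $ 2 = a" "qvec a b c $ 1 $ 3 = b" "qvec a b c $ 1 $ 4 = c" for a b c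
    by (simp_all add: qvec_def mi_def mj_def mk_def)
  then show ?thesis by metis
qed

lemma qvec_zero: "qvec 0 0 0 = 0"
  and qvec_add: "qvec a b c + qvec a' b' c' = qvec (a + a') (b + b') (c + c')"
  and qvec_diff: "qvec a b c - qvec a' b' c' = qvec (a - a') (b - b') (c - c')"
  and qvec_uminus: "- qvec a b c = qvec (- a) (- b) (- c)"
  and qvec_scaleR: "x *\<^sub>R qvec a b c = qvec (x * a) (x * b) (x * c)"
  by (simp_all add: qvec_def algebra_simps)

lemma lie_add_left: "lie (A + B) C = lie A C + lie B C"
  and lie_add_right: "lie C (A + B) = lie C A + lie C B"
  and lie_scaleR_left: "lie (x *\<^sub>R A) C = x *\<^sub>R lie A C"
  and lie_scaleR_right: "lie C (x *\<^sub>R A) = x *\<^sub>R lie C A"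
  by (simp_all add: lie_def vec_eq_iff matrix_matrix_mult_def sum.distrib sum_distrib_left
      algebra_simps)

lemma linear_lie: "linear (lie A)"
  by (rule linearI) (simp_all add: lie_add_right lie_scaleR_right)

lemma lie_sum_left: "lie (\<Sum>b\<in>B. f b) X = (\<Sum>b\<in>B. lie (f b) X)"
proof -
  have "linear (\<lambda>A. lie A X)"
    by (rule linearI) (simp_all add: lie_add_left lie_scaleR_left)
  then show ?thesis
    using linear_sum[of "\<lambda>A. lie A X" f B] by (simp add: o_def)
qed

lemma lie_qvec:
  "lie (qvec a b c) (qvec a' b' c') =
     qvec (2 * (b * c' - c * b')) (2 * (c * a' - a * c')) (2 * (a * b' - b * a'))"
  by (simp add: lie_def qvec_def mi_def mj_def mk_def vec_eq_iff matrix_matrix_mult_def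
      sum_4 forall_4 algebra_simps)

lemma gLie_iff_qvec: "X \<in> gLie \<longleftrightarrow> (\<exists>a b c. X = qvec a b c)"
  unfolding gLie_def span_insert[of mi] span_insert[of mj] span_insert[of mk] span_empty qvec_def
  by (auto simp: algebra_simps)

lemma lie_gLie: "X \<in> gLie \<Longrightarrow> Y \<in> gLie \<Longrightarrow> lie X Y \<in> gLie"
  by (auto simp: gLie_iff_qvec lie_qvec qvec_eq_iff)

definition gbasis :: "nat \<Rightarrow> mat4" where
  "gbasis b = (if b = 1 then mi else if b = 2 then mj else mk)"

lemma gbasis_gLie: "gbasis b \<in> gLie"
  by (simp add: gbasis_def gLie_def span_base)

section \<open>The curvature of B\<close>

definition conn_denom :: "real \<Rightarrow> (nat \<Rightarrow> real) \<Rightarrow> real" where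
  "conn_denom \<epsilon> p = \<epsilon>\<^sup>2 + (\<Sum>m\<in>{1..4}. (p (4 + m))\<^sup>2)"

definition conn_num :: "(nat \<Rightarrow> real) \<Rightarrow> nat \<Rightarrow> mat4" where
  "conn_num p l =
    (if l = 5 then qvec (- p 6) (- p 7) (- p 8)
     else if l = 6 then qvec (p 5) (- p 8) (p 7)
     else if l = 7 then qvec (p 8) (p 5) (- p 6)
     else if l = 8 then qvec (- p 7) (p 6) (p 5) else 0)"

definition unit_coord :: "nat \<Rightarrow> nat \<Rightarrow> real" where
  "unit_coord k i = (if i = k then 1 else 0)"

(* asd b k l = omega_b(e_k, e_l) for the anti-self-dual 2-forms omega_1 = e^56 - e^78,
   omega_2 = e^57 + e^68, omega_3 = e^58 - e^67 of E^perp. *)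
definition asd :: "nat \<Rightarrow> nat \<Rightarrow> nat \<Rightarrow> real" where
  "asd b k l =
    (if b = 1 then (if (k, l) = (5, 6) \<or> (k, l) = (8, 7) then 1
                    else if (k, l) = (6, 5) \<or> (k, l) = (7, 8) then -1 else 0)
     else if b = 2 then (if (k, l) = (5, 7) \<or> (k, l) = (6, 8) then 1
                    else if (k, l) = (7, 5) \<or> (k, l) = (8, 6) then -1 else 0)
     else if b = 3 then (if (k, l) = (5, 8) \<or> (k, l) = (7, 6) then 1
                    else if (k, l) = (8, 5) \<or> (k, l) = (6, 7) then -1 else 0)
     else 0)"

lemma sum_atLeastAtMost_1_4: "(\<Sum>m\<in>{1..4::nat}. f m) = f 1 + f 2 + f 3 + f 4"
  by (simp add: numeral_eq_Suc atLeastAtMostSuc_conv add.commute add.left_commute)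

lemma conn_denom_eq: "conn_denom \<epsilon> p = \<epsilon>\<^sup>2 + ((p 5)\<^sup>2 + (p 6)\<^sup>2 + (p 7)\<^sup>2 + (p 8)\<^sup>2)"
  unfolding conn_denom_def sum_atLeastAtMost_1_4 by simp

lemma conn_denom_pos: "\<epsilon> > 0 \<Longrightarrow> conn_denom \<epsilon> p > 0"
  unfolding conn_denom_eq by (intro add_pos_nonneg) auto

lemma Bconn_eq: "Bconn \<epsilon> p l = (1 / conn_denom \<epsilon> p) *\<^sub>R conn_num p l"
  by (simp add: Bconn_def conn_denom_def conn_num_def Let_def sum_atLeastAtMost_1_4 qvec_def
      algebra_simps)

lemma conn_num_shift:
  "k \<in> {5,6,7,8} \<Longrightarrow> conn_num (p(k := p k + t)) l = conn_num p l + t *\<^sub>R conn_num (unit_coord k) l"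
  by (auto simp: conn_num_def unit_coord_def qvec_def algebra_simps)

lemma conn_denom_shift:
  "k \<in> {5,6,7,8} \<Longrightarrow> conn_denom \<epsilon> (p(k := p k + t)) = conn_denom \<epsilon> p + 2 * p k * t + t\<^sup>2"
  by (auto simp: conn_denom_eq power2_eq_square algebra_simps)

lemma conn_num_update_other: "k \<notin> {5,6,7,8} \<Longrightarrow> conn_num (p(k := x)) l = conn_num p l"
  by (simp add: conn_num_def)

lemma conn_denom_update_other: "k \<notin> {5,6,7,8} \<Longrightarrow> conn_denom \<epsilon> (p(k := x)) = conn_denom \<epsilon> p"
  by (simp add: conn_denom_eq)

lemma deriv_linear_over_quadratic:
  fixes D :: real
  assumes "D \<noteq> 0"
  shows "deriv (\<lambda>t. (m + t * g) / (D + b * t + t\<^sup>2)) 0 = g / D - b * m / D\<^sup>2"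
proof -
  have "((\<lambda>t. (m + t * g) / (D + b * t + t\<^sup>2)) has_real_derivative (g * D - m * b) / D\<^sup>2) (at 0)"
    using assms by (auto intro!: derivative_eq_intros simp: power2_eq_square)
  then show ?thesis
    using assms by (simp add: DERIV_imp_deriv field_simps power2_eq_square)
qed

lemma dB_eq:
  assumes "\<epsilon> > 0"
  shows "dB \<epsilon> p k l =
    (if k \<in> {5,6,7,8} then (1 / conn_denom \<epsilon> p) *\<^sub>R conn_num (unit_coord k) l
                          - (2 * p k / (conn_denom \<epsilon> p)\<^sup>2) *\<^sub>R conn_num p l
     else 0)"
proof (cases "k \<in> {5,6,7,8}")
  case True
  let ?D = "conn_denom \<epsilon> p"
  have "?D \<noteq> 0"
    using conn_denom_pos[OF assms] by (metis less_irrefl)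
  have "deriv (\<lambda>t. Bconn \<epsilon> (p(k := p k + t)) l $ r $ c) 0 =
      conn_num (unit_coord k) l $ r $ c / ?D - 2 * p k * (conn_num p l $ r $ c) / ?D\<^sup>2" for r c
  proof -
    have "(\<lambda>t. Bconn \<epsilon> (p(k := p k + t)) l $ r $ c) =
        (\<lambda>t. (conn_num p l $ r $ c + t * conn_num (unit_coord k) l $ r $ c)
              / (?D + 2 * p k * t + t\<^sup>2))"
      using True by (simp add: Bconn_eq conn_num_shift conn_denom_shift divide_inverse mult.commute)
    then show ?thesis
      using deriv_linear_over_quadratic[OF \<open>?D \<noteq> 0\<close>] by simp
  qed
  then show ?thesis
    using True by (simp add: dB_def vec_eq_iff divide_inverse power2_eq_square)
next
  case False
  then show ?thesis
    by (simp add: dB_def vec_eq_iff Bconn_eq conn_num_update_other conn_denom_update_other)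
qed

lemma conn_num_curvature_identity:
  assumes "k \<in> {5,6,7,8}" "l \<in> {5,6,7,8}"
  shows "conn_denom \<epsilon> p *\<^sub>R (conn_num (unit_coord k) l - conn_num (unit_coord l) k)
           - 2 *\<^sub>R (p k *\<^sub>R conn_num p l - p l *\<^sub>R conn_num p k)
           + lie (conn_num p k) (conn_num p l)
         = (2 * \<epsilon>\<^sup>2) *\<^sub>R qvec (asd 1 k l) (asd 2 k l) (asd 3 k l)"
  using assms unfolding conn_denom_eq
  by (auto simp: conn_num_def unit_coord_def asd_def lie_qvec qvec_scaleR qvec_diff qvec_add
      qvec_uminus qvec_zero qvec_eq_iff power2_eq_square algebra_simps)

lemma FB_eq:
  assumes "\<epsilon> > 0"
  shows "FB \<epsilon> p k l = (2 * \<epsilon>\<^sup>2 / (conn_denom \<epsilon> p)\<^sup>2) *\<^sub>R (\<Sum>b\<in>{1,2,3}. asd b k l *\<^sub>R gbasis b)"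
proof -
  let ?D = "conn_denom \<epsilon> p"
  have asd_sum: "(\<Sum>b\<in>{1,2,3}. asd b k l *\<^sub>R gbasis b) = qvec (asd 1 k l) (asd 2 k l) (asd 3 k l)"
    by (simp add: gbasis_def qvec_def)
  show ?thesis
  proof (cases "k \<in> {5,6,7,8} \<and> l \<in> {5,6,7,8}")
    case True
    have "?D \<noteq> 0"
      using conn_denom_pos[OF assms] by (metis less_irrefl)
    then have "FB \<epsilon> p k l = (1 / ?D\<^sup>2) *\<^sub>R (?D *\<^sub>R (conn_num (unit_coord k) l - conn_num (unit_coord l) k)
           - 2 *\<^sub>R (p k *\<^sub>R conn_num p l - p l *\<^sub>R conn_num p k)
           + lie (conn_num p k) (conn_num p l))"
      using True by (simp add: FB_def dB_eq[OF assms] Bconn_eq lie_scaleR_left lie_scaleR_right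
          scaleR_diff_right scaleR_add_right power2_eq_square algebra_simps)
    then show ?thesis
      unfolding asd_sum using True by (simp add: conn_num_curvature_identity)
  next
    case False
    then show ?thesis
      by (auto simp: FB_def dB_eq[OF assms] Bconn_eq conn_num_def asd_def lie_def)
  qed
qed

section \<open>Forms\<close>

lemma finite_idx: "finite idx"
  by (simp add: idx_def)

lemma card_idx: "card idx = 8"
  by (simp add: idx_def)

definition eform :: "nat set \<Rightarrow> nat set \<Rightarrow> real" where
  "eform A U = (if U = A then 1 else 0)"

lemma e1f_eq_eform: "e1f i = eform {i}"
  by (simp add: e1f_def eform_def fun_eq_iff)

lemma wedge_add_left: "wedge (\<lambda>S. f S + g S) \<beta> W = wedge f \<beta> W + wedge g \<beta> W"
  by (simp add: wedge_def sum.distrib scaleR_add_left algebra_simps)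

lemma wedge_scaled_eform:
  "wedge (\<lambda>S. c * eform A S) \<beta> W =
     (if W \<subseteq> idx \<and> A \<subseteq> W then (sgn2 A (W - A) * c) *\<^sub>R \<beta> (W - A) else 0)"
proof -
  have "finite W" if "W \<subseteq> idx"
    using that finite_idx finite_subset by blast
  moreover have "(sgn2 S (W - S) * (c * eform A S)) *\<^sub>R \<beta> (W - S) =
      (if S = A then (sgn2 A (W - A) * c) *\<^sub>R \<beta> (W - A) else 0)" for S
    by (simp add: eform_def)
  ultimately show ?thesis
    by (simp add: wedge_def sum.delta')
qed

lemma wedge_e1f:
  "wedge (e1f a) \<beta> U = (if U \<subseteq> idx \<and> a \<in> U then sgn2 {a} (U - {a}) *\<^sub>R \<beta> (U - {a}) else 0)"
  using wedge_scaled_eform[of 1 "{a}" \<beta> U] by (simp add: e1f_eq_eform)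

lemma linear_wedge: "linear f \<Longrightarrow> f (wedge \<alpha> \<beta> U) = wedge \<alpha> (\<lambda>V. f (\<beta> V)) U"
  by (simp add: wedge_def linear_sum linear_scale linear_0)

lemma linear_hodge: "linear f \<Longrightarrow> f (hodge \<beta> U) = hodge (\<lambda>V. f (\<beta> V)) U"
  by (simp add: hodge_def linear_scale linear_0)

lemma linear_intprod: "linear f \<Longrightarrow> f (intprod l \<beta> U) = intprod l (\<lambda>V. f (\<beta> V)) U"
  by (simp add: intprod_def linear_scale linear_0)

lemma is_form_e1f: "i \<in> idx \<Longrightarrow> is_form 1 (e1f i)"
  by (simp add: is_form_def e1f_def)

lemma is_form_wedge:
  assumes "is_form a \<alpha>" "is_form b \<beta>"
  shows "is_form (a + b) (wedge \<alpha> \<beta>)"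
  unfolding is_form_def
proof (intro allI impI)
  fix U :: "nat set"
  assume U: "\<not> (U \<subseteq> idx \<and> card U = a + b)"
  show "wedge \<alpha> \<beta> U = 0"
  proof (cases "U \<subseteq> idx")
    case True
    then have "finite U"
      using finite_idx finite_subset by blast
    have "\<alpha> S = 0 \<or> \<beta> (U - S) = 0" if "S \<subseteq> U" for S
    proof -
      have "card S + card (U - S) = card U"
        using \<open>finite U\<close> that by (simp add: card_Diff_subset card_mono finite_subset)
      moreover have "S \<subseteq> idx" "U - S \<subseteq> idx"
        using True that by auto
      ultimately show ?thesis
        using assms U True unfolding is_form_def by metis
    qed
    then show ?thesis
      using True by (auto simp: wedge_def intro!: sum.neutral)
  qed (simp add: wedge_def)
qed

lemma is_form_hodge:
  assumes "is_form k \<alpha>"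
  shows "is_form (8 - k) (hodge \<alpha>)"
  unfolding is_form_def
proof (intro allI impI)
  fix U :: "nat set"
  assume U: "\<not> (U \<subseteq> idx \<and> card U = 8 - k)"
  show "hodge \<alpha> U = 0"
  proof (cases "U \<subseteq> idx")
    case True
    then have "card (idx - U) = 8 - card U" "card U \<le> 8"
      using finite_idx card_idx card_mono[OF finite_idx True] by (auto simp: card_Diff_subset finite_subset)
    then have "card (idx - U) \<noteq> k"
      using U True by auto
    then show ?thesis
      using assms True by (simp add: is_form_def hodge_def)
  qed (simp add: hodge_def)
qed

lemma is_form_intprod:
  assumes "is_form (Suc n) \<alpha>"
  shows "is_form n (intprod l \<alpha>)"
  unfolding is_form_def
proof (intro allI impI)
  fix U :: "nat set"
  assume U: "\<not> (U \<subseteq> idx \<and> card U = n)"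
  show "intprod l \<alpha> U = 0"
  proof (cases "l \<in> idx \<and> U \<subseteq> idx \<and> l \<notin> U")
    case True
    then have "card (insert l U) = Suc (card U)"
      using finite_idx finite_subset by (metis card_insert_disjoint)
    then have "\<alpha> (insert l U) = 0"
      using assms U True unfolding is_form_def by auto
    then show ?thesis
      by (simp add: intprod_def)
  qed (auto simp: intprod_def)
qed

lemma is_form_Omega: "is_form 4 Omega"
proof -
  have w4: "is_form 4 (w4 a b c d)" if "{a, b, c, d} \<subseteq> idx" for a b c d
    using that is_form_wedge[OF is_form_e1f is_form_wedge[OF is_form_e1f
        is_form_wedge[OF is_form_e1f is_form_e1f]], of a b c d]
    by (simp add: w4_def eval_nat_numeral)
  show ?thesis
    using w4 unfolding is_form_def Omega_def by (simp add: idx_def)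
qed

lemma is_form_linear_image: "linear f \<Longrightarrow> is_form k \<alpha> \<Longrightarrow> is_form k (\<lambda>U. f (\<alpha> U))"
  by (simp add: is_form_def linear_0)

definition omega_star :: "(nat set \<Rightarrow> 'v::real_vector) \<Rightarrow> nat set \<Rightarrow> 'v" where
  "omega_star \<alpha> = hodge (wedge Omega \<alpha>)"

lemma is_form_omega_star: "is_form 2 \<alpha> \<Longrightarrow> is_form 2 (omega_star \<alpha>)"
  using is_form_hodge[OF is_form_wedge[OF is_form_Omega]] by (fastforce simp: omega_star_def)

lemma linear_omega_star: "linear f \<Longrightarrow> f (omega_star \<beta> U) = omega_star (\<lambda>V. f (\<beta> V)) U"
  by (simp add: omega_star_def linear_hodge linear_wedge)

lemma omega_star_add: "omega_star (\<lambda>V. \<alpha> V + \<beta> V) U = omega_star \<alpha> U + omega_star \<beta> U"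
  by (simp add: omega_star_def hodge_def wedge_def sum.distrib scaleR_add_right)

lemma omega_star_zero: "omega_star (\<lambda>V. 0) U = 0"
  by (simp add: omega_star_def hodge_def wedge_def)

lemma omega_star_sum:
  "finite B \<Longrightarrow> omega_star (\<lambda>V. \<Sum>b\<in>B. \<alpha> b V) U = (\<Sum>b\<in>B. omega_star (\<alpha> b) U)"
  by (induction B rule: finite_induct) (simp_all add: omega_star_add omega_star_zero)

(* For skew A this is the action of A, as an element of so(8), on forms by derivations. *)
definition so_action :: "(nat \<Rightarrow> nat \<Rightarrow> real) \<Rightarrow> (nat set \<Rightarrow> 'v::real_vector) \<Rightarrow> nat set \<Rightarrow> 'v"
  where "so_action A \<alpha> U = (\<Sum>k\<in>{1..8}. \<Sum>l\<in>{1..8}. A k l *\<^sub>R wedge (e1f k) (intprod l \<alpha>) U)"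

lemma linear_so_action:
  assumes "linear f"
  shows "f (so_action A \<beta> U) = so_action A (\<lambda>V. f (\<beta> V)) U"
proof -
  have "(\<lambda>V. f (intprod l \<beta> V)) = intprod l (\<lambda>V. f (\<beta> V))" for l
    using linear_intprod[OF assms] by blast
  then have "f (wedge (e1f k) (intprod l \<beta>) U) = wedge (e1f k) (intprod l (\<lambda>V. f (\<beta> V))) U" for k l
    by (simp only: linear_wedge[OF assms])
  then show ?thesis
    by (simp add: so_action_def linear_sum[OF assms] linear_scale[OF assms])
qed

lemma is_form_so_action:
  assumes "is_form (Suc n) \<alpha>"
  shows "is_form (Suc n) (so_action A \<alpha>)"
proof -
  have "is_form (Suc n) (wedge (e1f k) (intprod l \<alpha>))" if "k \<in> idx" for k l
    using is_form_wedge[OF is_form_e1f[OF that] is_form_intprod[OF assms]] by simp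
  then show ?thesis
    by (simp add: is_form_def so_action_def idx_def)
qed

lemma so_action_in_subspace:
  assumes "subspace S" "\<And>V. \<alpha> V \<in> S"
  shows "so_action A \<alpha> U \<in> S"
  using assms unfolding so_action_def wedge_e1f intprod_def
  by (simp add: subspace_sum subspace_mul subspace_0)

section \<open>Spin(7)-invariance of the anti-self-dual forms\<close>

lemma wedge_e1f_eform:
  assumes "a \<in> idx" "V \<subseteq> idx" "\<forall>x\<in>V. a < x"
  shows "wedge (e1f a) (eform V) = eform (insert a V)"
proof
  fix U
  have "{(s, t). s \<in> {a} \<and> t \<in> V \<and> t < s} = {}"
    using assms(3) by auto
  then have "sgn2 {a} V = 1"
    by (simp only: sgn2_def card.empty power_0)
  moreover have "U \<subseteq> idx \<and> a \<in> U \<and> U - {a} = V \<longleftrightarrow> U = insert a V"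
    using assms by auto
  ultimately show "wedge (e1f a) (eform V) U = eform (insert a V) U"
    unfolding wedge_e1f eform_def by auto
qed

lemma w4_eq_eform:
  assumes "{a, b, c, d} \<subseteq> idx" "a < b" "b < c" "c < d"
  shows "w4 a b c d = eform {a, b, c, d}"
  using assms by (simp add: w4_def e1f_eq_eform[of d] wedge_e1f_eform)

definition Omega_terms :: "(real \<times> nat set) list" where
  "Omega_terms =
    [(-1, {1,2,5,6}), (-1, {1,2,7,8}), (-1, {3,4,5,6}), (-1, {3,4,7,8}), (1, {1,3,6,8}),
     (-1, {1,3,5,7}), (-1, {2,4,6,8}), (1, {2,4,5,7}), (-1, {1,4,6,7}), (-1, {1,4,5,8}),
     (-1, {2,3,6,7}), (-1, {2,3,5,8}), (1, {1,2,3,4}), (1, {5,6,7,8})]"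

lemma Omega_eq_sum_list: "Omega U = (\<Sum>(c, A)\<leftarrow>Omega_terms. c * eform A U)"
  unfolding Omega_def Omega_terms_def
  by (simp add: w4_eq_eform idx_def)

lemma wedge_sum_list_left:
  "wedge (\<lambda>S. \<Sum>(c, A)\<leftarrow>L. c * eform A S) \<beta> W =
     (\<Sum>(c, A)\<leftarrow>L. if W \<subseteq> idx \<and> A \<subseteq> W then (sgn2 A (W - A) * c) *\<^sub>R \<beta> (W - A) else 0)"
proof (induction L)
  case Nil
  then show ?case
    by (simp add: wedge_def)
next
  case (Cons x L)
  then show ?case
    by (cases x) (simp add: wedge_add_left wedge_scaled_eform)
qed

lemma wedge_Omega:
  "wedge Omega \<beta> W =
     (\<Sum>(c, A)\<leftarrow>Omega_terms. if W \<subseteq> idx \<and> A \<subseteq> W then (sgn2 A (W - A) * c) *\<^sub>R \<beta> (W - A) else 0)"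
  using wedge_sum_list_left[of Omega_terms] by (simp add: Omega_eq_sum_list[abs_def])

lemma sgn2_eq_power_sum:
  assumes "finite S" "finite T"
  shows "sgn2 S T = (-1) ^ (\<Sum>s\<in>S. \<Sum>t\<in>T. if t < s then 1 else 0)"
proof -
  have "{(s, t). s \<in> S \<and> t \<in> T \<and> t < s} = Sigma S (\<lambda>s. {t\<in>T. t < s})"
    by auto
  then have "card {(s, t). s \<in> S \<and> t \<in> T \<and> t < s} = (\<Sum>s\<in>S. card {t\<in>T. t < s})"
    using assms by (simp add: card_SigmaI)
  also have "\<dots> = (\<Sum>s\<in>S. \<Sum>t\<in>T. if t < s then 1 else 0)"
    using assms(2) by (simp add: sum.inter_filter[symmetric])
  finally show ?thesis
    by (simp add: sgn2_def)
qed

lemma atLeastAtMost_1_8: "{1..8::nat} = {1,2,3,4,5,6,7,8}"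
  by auto

lemma idx_eq: "idx = {1,2,3,4,5,6,7,8}"
  by (auto simp: idx_def)

lemma so_action_asd:
  "so_action (asd 1) \<alpha> = (\<lambda>U. wedge (e1f 5) (intprod 6 \<alpha>) U - wedge (e1f 6) (intprod 5 \<alpha>) U
     - wedge (e1f 7) (intprod 8 \<alpha>) U + wedge (e1f 8) (intprod 7 \<alpha>) U)"
  "so_action (asd 2) \<alpha> = (\<lambda>U. wedge (e1f 5) (intprod 7 \<alpha>) U - wedge (e1f 7) (intprod 5 \<alpha>) U
     + wedge (e1f 6) (intprod 8 \<alpha>) U - wedge (e1f 8) (intprod 6 \<alpha>) U)"
  "so_action (asd 3) \<alpha> = (\<lambda>U. wedge (e1f 5) (intprod 8 \<alpha>) U - wedge (e1f 8) (intprod 5 \<alpha>) U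
     - wedge (e1f 6) (intprod 7 \<alpha>) U + wedge (e1f 7) (intprod 6 \<alpha>) U)"
  unfolding so_action_def atLeastAtMost_1_8 by (simp_all add: asd_def fun_eq_iff)

lemma idx_two_subsets:
  assumes "U \<subseteq> idx" "card U = 2"
  shows "U \<in> {{1,2}, {1,3}, {1,4}, {1,5}, {1,6}, {1,7}, {1,8}, {2,3}, {2,4}, {2,5}, {2,6}, {2,7},
    {2,8}, {3,4}, {3,5}, {3,6}, {3,7}, {3,8}, {4,5}, {4,6}, {4,7}, {4,8}, {5,6}, {5,7}, {5,8},
    {6,7}, {6,8}, {7,8}}"
proof -
  obtain x y where U: "U = {x, y}" "x < y"
    using assms(2) by (auto simp: card_2_iff) (metis insert_commute linorder_neqE_nat)
  moreover have "x \<in> {1,2,3,4,5,6,7,8}" "y \<in> {1,2,3,4,5,6,7,8}"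
    using assms(1) U by (auto simp: idx_def)
  ultimately show ?thesis
    by (simp only: insert_iff empty_iff) (elim disjE; simp)
qed

(* The asd b lie in spin(7), the stabiliser of Omega; checked on the 28 basis 2-forms. *)
lemma omega_star_so_action_asd_commute_real:
  fixes \<alpha> :: "nat set \<Rightarrow> real"
  assumes "U \<subseteq> idx" "card U = 2" "b \<in> {1,2,3}"
  shows "omega_star (so_action (asd b) \<alpha>) U = so_action (asd b) (omega_star \<alpha>) U"
proof -
  from assms(3) consider "b = 1" | "b = 2" | "b = 3"
    by blast
  then show ?thesis
    using idx_two_subsets[OF assms(1,2)] unfolding insert_iff empty_iff
    by cases
      (simp only: so_action_asd omega_star_def; elim disjE;
        simp add: hodge_def wedge_Omega Omega_terms_def sgn2_eq_power_sum wedge_e1f intprod_def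
        idx_eq insert_Diff_if insert_commute)+
qed

lemma omega_star_so_action_asd_commute:
  fixes \<alpha> :: "nat set \<Rightarrow> 'v::euclidean_space"
  assumes "U \<subseteq> idx" "card U = 2" "b \<in> {1,2,3}"
  shows "omega_star (so_action (asd b) \<alpha>) U = so_action (asd b) (omega_star \<alpha>) U"
proof (rule euclidean_eqI)
  fix i :: 'v
  have f: "linear (\<lambda>x::'v. x \<bullet> i)"
    using bounded_linear_inner_left by (rule bounded_linear.linear)
  have "omega_star (so_action (asd b) \<alpha>) U \<bullet> i = omega_star (so_action (asd b) (\<lambda>V. \<alpha> V \<bullet> i)) U"
    by (simp add: linear_omega_star[OF f] linear_so_action[OF f])
  also have "\<dots> = so_action (asd b) (omega_star (\<lambda>V. \<alpha> V \<bullet> i)) U"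
    by (rule omega_star_so_action_asd_commute_real[OF assms])
  also have "\<dots> = so_action (asd b) (omega_star \<alpha>) U \<bullet> i"
    by (simp add: linear_omega_star[OF f] linear_so_action[OF f])
  finally show "omega_star (so_action (asd b) \<alpha>) U \<bullet> i = so_action (asd b) (omega_star \<alpha>) U \<bullet> i" .
qed

section \<open>Invariance of Lambda^2_+ tensor g\<close>

lemma Lambda2plus_g_iff:
  "\<phi> \<in> Lambda2plus_g \<longleftrightarrow> is_form 2 \<phi> \<and> (\<forall>U. \<phi> U \<in> gLie) \<and> (\<forall>U. omega_star \<phi> U = 3 *\<^sub>R \<phi> U)"
  by (auto simp: Lambda2plus_g_def omega_star_def)

lemma Lambda2plus_g_linear_image:
  assumes "linear f" "\<And>X. X \<in> gLie \<Longrightarrow> f X \<in> gLie" "\<phi> \<in> Lambda2plus_g"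
  shows "(\<lambda>U. f (\<phi> U)) \<in> Lambda2plus_g"
  using assms(3) unfolding Lambda2plus_g_iff
  by (simp add: is_form_linear_image[OF assms(1)] assms(2) linear_omega_star[OF assms(1), symmetric]
      linear_scale[OF assms(1)])

lemma Lambda2plus_g_sum:
  assumes "finite B" "\<And>b. b \<in> B \<Longrightarrow> \<phi> b \<in> Lambda2plus_g"
  shows "(\<lambda>U. \<Sum>b\<in>B. \<phi> b U) \<in> Lambda2plus_g"
proof -
  have "is_form 2 (\<phi> b)" "\<phi> b U \<in> gLie" "omega_star (\<phi> b) U = 3 *\<^sub>R \<phi> b U" if "b \<in> B" for b U
    using assms(2)[OF that] unfolding Lambda2plus_g_iff by auto
  then show ?thesis
    unfolding Lambda2plus_g_iff is_form_def gLie_def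
    by (auto simp: omega_star_sum[OF assms(1)] scaleR_sum_right intro: span_sum)
qed

lemma Lambda2plus_g_so_action_asd:
  assumes "\<phi> \<in> Lambda2plus_g" "b \<in> {1,2,3}"
  shows "so_action (asd b) \<phi> \<in> Lambda2plus_g"
proof -
  have form: "is_form 2 \<phi>" and in_gLie: "\<And>U. \<phi> U \<in> gLie"
    and eigen: "omega_star \<phi> = (\<lambda>U. 3 *\<^sub>R \<phi> U)"
    using assms(1) unfolding Lambda2plus_g_iff by auto
  have form': "is_form 2 (so_action (asd b) \<phi>)"
    using is_form_so_action[of 1] form by (simp add: numeral_2_eq_2)
  have "omega_star (so_action (asd b) \<phi>) U = 3 *\<^sub>R so_action (asd b) \<phi> U" for U
  proof (cases "U \<subseteq> idx \<and> card U = 2")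
    case True
    then have "omega_star (so_action (asd b) \<phi>) U = so_action (asd b) (\<lambda>V. 3 *\<^sub>R \<phi> V) U"
      using omega_star_so_action_asd_commute assms(2) eigen by metis
    also have "\<dots> = 3 *\<^sub>R so_action (asd b) \<phi> U"
      by (simp add: linear_so_action[OF linear_scale_self])
    finally show ?thesis .
  next
    case False
    then show ?thesis
      using is_form_omega_star[OF form'] form' by (simp add: is_form_def)
  qed
  moreover have "so_action (asd b) \<phi> U \<in> gLie" for U
    using so_action_in_subspace[OF subspace_span] in_gLie unfolding gLie_def by blast
  ultimately show ?thesis
    using form' unfolding Lambda2plus_g_iff by blast
qed

lemma sum_wedge_FB_eq:
  assumes "\<epsilon> > 0"
  shows "(\<lambda>U. \<Sum>k\<in>{1..8}. \<Sum>l\<in>{1..8}. wedge (e1f k) (\<lambda>V. lie (FB \<epsilon> p k l) (intprod l \<phi> V)) U)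
       = (\<lambda>U. (2 * \<epsilon>\<^sup>2 / (conn_denom \<epsilon> p)\<^sup>2) *\<^sub>R
                (\<Sum>b\<in>{1,2,3}. lie (gbasis b) (so_action (asd b) \<phi> U)))"
proof
  fix U
  define s where "s = 2 * \<epsilon>\<^sup>2 / (conn_denom \<epsilon> p)\<^sup>2"
  define W where "W k l = wedge (e1f k) (intprod l \<phi>) U" for k l
  have "wedge (e1f k) (\<lambda>V. lie (FB \<epsilon> p k l) (intprod l \<phi> V)) U = lie (FB \<epsilon> p k l) (W k l)" for k l
    unfolding W_def using linear_wedge[OF linear_lie] by metis
  also have "lie (FB \<epsilon> p k l) (W k l) = s *\<^sub>R (\<Sum>b\<in>{1,2,3}. asd b k l *\<^sub>R lie (gbasis b) (W k l))"
    for k l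
    unfolding FB_eq[OF assms] s_def by (simp only: lie_scaleR_left lie_sum_left)
  finally have "(\<Sum>k\<in>{1..8}. \<Sum>l\<in>{1..8}. wedge (e1f k) (\<lambda>V. lie (FB \<epsilon> p k l) (intprod l \<phi> V)) U)
      = s *\<^sub>R (\<Sum>b\<in>{1,2,3}. \<Sum>k\<in>{1..8}. \<Sum>l\<in>{1..8}. asd b k l *\<^sub>R lie (gbasis b) (W k l))"
    by (simp only: scaleR_sum_right sum.swap[of _ "{1..8}" "{1,2,3}"])
  also have "\<dots> = s *\<^sub>R (\<Sum>b\<in>{1,2,3}. lie (gbasis b) (so_action (asd b) \<phi> U))"
    by (simp add: so_action_def W_def linear_sum[OF linear_lie] linear_scale[OF linear_lie])
  finally show "(\<Sum>k\<in>{1..8}. \<Sum>l\<in>{1..8}. wedge (e1f k) (\<lambda>V. lie (FB \<epsilon> p k l) (intprod l \<phi> V)) U)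
      = (2 * \<epsilon>\<^sup>2 / (conn_denom \<epsilon> p)\<^sup>2) *\<^sub>R (\<Sum>b\<in>{1,2,3}. lie (gbasis b) (so_action (asd b) \<phi> U))"
    unfolding s_def .
qed

theorem lemma2p2:
  fixes \<epsilon> :: real and p :: "nat \<Rightarrow> real" and \<phi> :: "nat set \<Rightarrow> mat4"
  assumes "\<epsilon> > 0"
    and "\<phi> \<in> Lambda2plus_g"
  shows "(\<lambda>U. \<Sum>k\<in>{1..8}. \<Sum>l\<in>{1..8}.
            wedge (e1f k) (\<lambda>V. lie (FB \<epsilon> p k l) (intprod l \<phi> V)) U) \<in> Lambda2plus_g"
proof -
  have "(\<lambda>U. lie (gbasis b) (so_action (asd b) \<phi> U)) \<in> Lambda2plus_g" if "b \<in> {1,2,3}" for b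
    using Lambda2plus_g_linear_image[OF linear_lie lie_gLie[OF gbasis_gLie]
        Lambda2plus_g_so_action_asd[OF assms(2) that]] .
  then have sum: "(\<lambda>U. \<Sum>b\<in>{1,2,3}. lie (gbasis b) (so_action (asd b) \<phi> U)) \<in> Lambda2plus_g"
    by (intro Lambda2plus_g_sum) auto
  have "(\<lambda>U. (2 * \<epsilon>\<^sup>2 / (conn_denom \<epsilon> p)\<^sup>2) *\<^sub>R
                (\<Sum>b\<in>{1,2,3}. lie (gbasis b) (so_action (asd b) \<phi> U))) \<in> Lambda2plus_g"
    using Lambda2plus_g_linear_image[OF linear_scale_self span_scale[of _ "{mi, mj, mk}",
        folded gLie_def] sum] .
  then show ?thesis
    unfolding sum_wedge_FB_eq[OF assms(1)] .
qed

end
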